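(* Let $M\in\mathbb{N}$ and $t\ge 0$. Let $\gamma_1,\dots,\gamma_M\in\mathbb{C}$ with $\mathrm{Re}(\gamma_j)>0$, let $\nu\in\mathbb{C}\setminus\{0\}$ with $\mathrm{Re}(\nu)>0$, let $\delta_1,\dots,\delta_M\in\mathbb{C}\setminus\{0\}$ with $\mathrm{Re}(\delta_j)>0$, and let $\eta_1,\dots,\eta_M\in\mathbb{C}$ be pairwise distinct. Then $$\Bigl(x^{\delta_1-1}E^{\gamma_1}_{\nu,\delta_1}(\eta_1x^\nu)\ast\cdots\ast x^{\delta_M-1}E^{\gamma_M}_{\nu,\delta_M}(\eta_Mx^\nu)\Bigr)(t)=t^{\sum_{j=1}^M\delta_j-1}\,E^{(\gamma_1,\dots,\gamma_M)}_{\nu,\sum_{j=1}^M\delta_j}\bigl(\eta_1t^\nu,\dots,\eta_Mt^\nu\bigr),$$ where the convolution is performed with respect to the variable $x\ge 0$.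
   Context: For $\nu,\gamma,\delta\in\mathbb{C}$ with positive real parts, the generalized (three-parameter, Prabhakar) Mittag-Leffler function is $E^{\gamma}_{\nu,\delta}(x)=\sum_{k=0}^\infty\frac{\Gamma(\gamma+k)}{\Gamma(\gamma)\,k!}\frac{x^k}{\Gamma(\nu k+\delta)}$. For $\gamma=(\gamma_1,\dots,\gamma_M)\in\mathbb{C}^M$ with $\mathrm{Re}(\gamma_j)>0$, $\nu,\delta\in\mathbb{C}$ with $\mathrm{Re}(\nu)>0$, and $x=(x_1,\dots,x_M)\in\mathbb{C}^M$, the multivariate generalized Mittag-Leffler function is $$E^{\gamma}_{\nu,\delta}(x)=\sum_{k_1,\dots,k_M=0}^\infty\prod_{j=1}^M\frac{\Gamma(\gamma_j+k_j)}{\Gamma(\gamma_j)\,k_j!}x_j^{k_j}\;\frac{1}{\Gamma\bigl(\nu\sum_{j=1}^Mk_j+\delta\bigr)}.$$ The convolution of functions on $[0,\infty)$ is $(f\ast g)(t)=\int_0^t f(t-x)g(x)\,dx$. *)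

theory Defs
  imports "HOL-Analysis.Analysis"
begin

definition ML3 :: "complex \<Rightarrow> complex \<Rightarrow> complex \<Rightarrow> complex \<Rightarrow> complex" where
  "ML3 \<gamma> \<nu> \<delta> x =
     (\<Sum>k. Gamma (\<gamma> + of_nat k) / (Gamma \<gamma> * fact k) * x ^ k / Gamma (\<nu> * of_nat k + \<delta>))"

text \<open>Multivariate generalized Mittag-Leffler function with M variables; the
  vectors gamma and x are indexed by 0..M-1, multi-indices are the
  functions in the extensional function space from {..<M} to the naturals.\<close>
definition MML :: "nat \<Rightarrow> (nat \<Rightarrow> complex) \<Rightarrow> complex \<Rightarrow> complex \<Rightarrow> (nat \<Rightarrow> complex) \<Rightarrow> complex" where
  "MML M \<gamma> \<nu> \<delta> x =
     infsum (\<lambda>k. (\<Prod>j<M. Gamma (\<gamma> j + of_nat (k j)) / (Gamma (\<gamma> j) * fact (k j)) * x j ^ k j)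
                  / Gamma (\<nu> * of_nat (\<Sum>j<M. k j) + \<delta>))
            ({..<M} \<rightarrow>\<^sub>E (UNIV :: nat set))"

definition conv :: "(real \<Rightarrow> complex) \<Rightarrow> (real \<Rightarrow> complex) \<Rightarrow> real \<Rightarrow> complex" where
  "conv f g t = integral {0..t} (\<lambda>x. f (t - x) * g x)"

fun conv_iter :: "(nat \<Rightarrow> real \<Rightarrow> complex) \<Rightarrow> nat \<Rightarrow> real \<Rightarrow> complex" where
  "conv_iter f 0 = f 0"
| "conv_iter f (Suc n) = conv (conv_iter f n) (f (Suc n))"

end

theory Submission
  imports Defs "HOL-Real_Asymp.Real_Asymp"
begin

text \<open>
  Each factor x^(delta-1) E(eta x^nu) is an absolutely convergent generalised power series
  sum_m c_m x^(nu m + delta - 1) with c_m = (gamma)_m eta^m / (m! Gamma(nu m + delta)).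
  The convolution of two power functions is a Beta integral,
  x^(a-1) * x^(b-1) = B(a,b) t^(a+b-1), and B(a,b) = Gamma(a) Gamma(b) / Gamma(a+b)
  turns 1/(Gamma(a) Gamma(b)) into 1/Gamma(a+b). Hence convolving the series term by term,
  which is justified by dominated convergence with the real Beta kernel as dominating
  function, produces exactly the coefficients of the multivariate function; induction on
  the number of factors finishes the proof.
\<close>

section \<open>Beta integrals with complex exponents\<close>

lemma norm_of_real_powr: "x \<ge> 0 \<Longrightarrow> norm (complex_of_real x powr z) = x powr Re z"
  by (simp add: norm_powr_real_powr)

lemma Re_pos_not_nonpos_Ints: "Re z > 0 \<Longrightarrow> z \<notin> \<int>\<^sub>\<le>\<^sub>0"
  by (force elim!: nonpos_Ints_cases)

lemma Gamma_nonzero_Re_pos: "Re z > 0 \<Longrightarrow> Gamma z \<noteq> 0"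
  by (intro Gamma_nonzero Re_pos_not_nonpos_Ints)

lemma has_integral_rescale_unit_interval:
  fixes k :: "real \<Rightarrow> 'b::real_normed_vector"
  assumes "(k has_integral J) {0..1}" and "t > 0"
  shows "((\<lambda>x. k (x / t)) has_integral t *\<^sub>R J) {0..t}"
  using has_integral_affinity'[of k J 0 1 "1/t" 0] assms by (simp add: field_simps)

text \<open>At \<open>x = 0\<close> and \<open>x = t\<close> both sides vanish, since \<open>0 powr z = 0\<close>.\<close>

lemma Beta_kernel_rescale:
  fixes a b :: complex and t x :: real
  assumes "t > 0" and "0 \<le> x" "x \<le> t"
  shows "complex_of_real (t - x) powr (a - 1) * complex_of_real x powr (b - 1)
       = complex_of_real t powr (a + b - 2)
         * (complex_of_real (1 - x / t) powr (a - 1) * complex_of_real (x / t) powr (b - 1))"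
proof -
  have "complex_of_real (t - x) = complex_of_real t * complex_of_real (1 - x / t)"
       "complex_of_real x = complex_of_real t * complex_of_real (x / t)"
    using assms by (simp_all add: field_simps)
  moreover have "complex_of_real t powr (a + b - 2) = complex_of_real t powr (a - 1) * complex_of_real t powr (b - 1)"
    by (simp add: powr_add [symmetric])
  ultimately show ?thesis
    using assms by (simp add: powr_times_real del: of_real_diff of_real_divide)
qed

lemma has_integral_Beta_kernel_rescale:
  fixes a b J :: complex and t :: real
  assumes J: "((\<lambda>x. complex_of_real (1 - x) powr (a - 1) * complex_of_real x powr (b - 1)) has_integral J) {0..1}"
    and t: "t > 0"
  shows "((\<lambda>x. complex_of_real (t - x) powr (a - 1) * complex_of_real x powr (b - 1))
           has_integral complex_of_real t powr (a + b - 1) * J) {0..t}"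
proof -
  let ?c = "complex_of_real t powr (a + b - 2)"
  have "complex_of_real t powr (a + b - 1) = complex_of_real t powr ((a + b - 2) + 1)"
    by simp
  also have "\<dots> = ?c * complex_of_real t"
    using t by (subst powr_add) simp
  finally have "?c * (t *\<^sub>R J) = complex_of_real t powr (a + b - 1) * J"
    by (simp only: scaleR_conv_of_real mult_ac)
  with has_integral_mult_right[OF has_integral_rescale_unit_interval[OF J t], of ?c]
  have "((\<lambda>x. ?c * (complex_of_real (1 - x / t) powr (a - 1) * complex_of_real (x / t) powr (b - 1)))
          has_integral complex_of_real t powr (a + b - 1) * J) {0..t}"
    by (simp only:)
  then show ?thesis
    by (rule has_integral_eq[rotated]) (simp only: Beta_kernel_rescale[OF t] atLeastAtMost_iff)
qed

lemma has_integral_Beta_kernel_real: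
  fixes a b t :: real
  assumes "a > 0" "b > 0" "t > 0"
  shows "((\<lambda>x. (t - x) powr (a - 1) * x powr (b - 1)) has_integral t powr (a + b - 1) * Beta a b) {0..t}"
proof -
  let ?K = "\<lambda>t x. complex_of_real (t - x) powr (complex_of_real a - 1) * complex_of_real x powr (complex_of_real b - 1)"
  have real_powr: "complex_of_real x powr (complex_of_real c - 1) = complex_of_real (x powr (c - 1))"
    if "x \<ge> 0" for x c
    using powr_of_real[OF that, of "c - 1"] by simp
  have "((\<lambda>x. complex_of_real (x powr (b - 1) * (1 - x) powr (a - 1))) has_integral complex_of_real (Beta a b)) {0..1}"
    using has_integral_of_real[OF has_integral_Beta_real[of b a]] assms by (simp add: Beta_commute)
  then have "(?K 1 has_integral complex_of_real (Beta a b)) {0..1}"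
    by (rule has_integral_eq[rotated]) (simp add: real_powr mult.commute del: of_real_diff)
  from has_integral_Beta_kernel_rescale[OF this \<open>t > 0\<close>]
  have "(?K t has_integral complex_of_real t powr (complex_of_real a + complex_of_real b - 1)
          * complex_of_real (Beta a b)) {0..t}" .
  also have "complex_of_real t powr (complex_of_real a + complex_of_real b - 1) * complex_of_real (Beta a b)
      = complex_of_real (t powr (a + b - 1) * Beta a b)"
    using powr_of_real[of t "a + b - 1"] \<open>t > 0\<close> by simp
  finally have "((\<lambda>x. complex_of_real ((t - x) powr (a - 1) * x powr (b - 1)))
          has_integral complex_of_real (t powr (a + b - 1) * Beta a b)) {0..t}"
    by (rule has_integral_eq[rotated]) (simp add: real_powr del: of_real_diff)
  from has_integral_linear[OF this bounded_linear_Re] show ?thesis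
    by (simp add: o_def)
qed

lemma Beta_kernel_absolutely_integrable:
  fixes a b :: complex and t :: real
  assumes "Re a > 0" "Re b > 0" "t > 0"
  shows "(\<lambda>x. complex_of_real (t - x) powr (a - 1) * complex_of_real x powr (b - 1)) absolutely_integrable_on {0..t}"
proof -
  have "(\<lambda>x. (t - x) powr (Re a - 1) * x powr (Re b - 1)) integrable_on {0<..<t}"
    using has_integral_Beta_kernel_real[of "Re a" "Re b" t] assms
    by (simp add: has_integral_Icc_iff_Ioo[symmetric] has_integral_integrable)
  then have "(\<lambda>x. complex_of_real (t - x) powr (a - 1) * complex_of_real x powr (b - 1)) absolutely_integrable_on {0<..<t}"
    by (intro measurable_bounded_by_integrable_imp_absolutely_integrable continuous_imp_measurable_on_sets_lebesgue)
       (auto intro!: continuous_intros simp: norm_mult norm_powr_real_powr simp del: of_real_diff)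
  then show ?thesis
    using absolutely_integrable_on_open_interval by (metis box_real(1) cbox_interval)
qed

text \<open>
  The library provides the Beta integral only for real exponents. For complex ones, write
  \<open>Gamma a * Gamma b\<close> as a double integral of
  \<open>Gamma_integrand b t * Gamma_integrand a (u - t)\<close> and integrate over \<open>t\<close> first:
  by rescaling, the inner integral is \<open>Gamma_integrand (a + b) u\<close> times the Beta integral.
\<close>

definition Gamma_integrand :: "complex \<Rightarrow> real \<Rightarrow> complex" where
  "Gamma_integrand z t = indicator {0<..} t *\<^sub>R (complex_of_real t powr (z - 1) / complex_of_real (exp t))"

lemma Gamma_integrand_measurable [measurable]: "Gamma_integrand z \<in> borel_measurable borel"
  unfolding Gamma_integrand_def
  by (auto intro!: borel_measurable_continuous_on_indicator continuous_intros)

lemma Gamma_integrand_set_integrable: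
  assumes "Re z > 0"
  shows "set_integrable lborel {0<..} (\<lambda>t. complex_of_real t powr (z - 1) / complex_of_real (exp t))"
  unfolding set_integrable_def
  using absolutely_integrable_Gamma_integral'[OF assms]
  by (subst integrable_completion [symmetric])
     (auto simp: set_integrable_def intro!: borel_measurable_continuous_on_indicator continuous_intros)

lemma integrable_Gamma_integrand:
  assumes "Re z > 0"
  shows "integrable lborel (Gamma_integrand z)"
  using Gamma_integrand_set_integrable[OF assms]
  by (simp add: set_integrable_def Gamma_integrand_def [abs_def])

lemma integral_Gamma_integrand:
  assumes "Re z > 0"
  shows "(\<integral>t. Gamma_integrand z t \<partial>lborel) = Gamma z"
proof -
  have "(\<integral>t. Gamma_integrand z t \<partial>lborel)
      = integral {0<..} (\<lambda>t. complex_of_real t powr (z - 1) / complex_of_real (exp t))"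
    using set_borel_integral_eq_integral(2)[OF Gamma_integrand_set_integrable[OF assms]]
    by (simp add: set_lebesgue_integral_def Gamma_integrand_def)
  also have "\<dots> = Gamma z"
    using Gamma_integral_complex'[OF assms] by (rule integral_unique)
  finally show ?thesis .
qed

lemma integral_Gamma_integrand_shift:
  assumes "Re z > 0"
  shows "(\<integral>u. Gamma_integrand z (u - t) \<partial>lborel) = Gamma z"
  using lborel_integral_real_affine[of 1 "\<lambda>u. Gamma_integrand z (u - t)" t] integral_Gamma_integrand[OF assms]
  by simp

lemma Gamma_integrand_convolution:
  fixes a b J :: complex
  assumes a: "Re a > 0" and b: "Re b > 0"
    and J: "((\<lambda>x. complex_of_real (1 - x) powr (a - 1) * complex_of_real x powr (b - 1)) has_integral J) {0..1}"
  shows "(\<integral>t. Gamma_integrand b t * Gamma_integrand a (u - t) \<partial>lborel) = Gamma_integrand (a + b) u * J"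
proof (cases "u > 0")
  case False
  then have vanish: "Gamma_integrand b t * Gamma_integrand a (u - t) = 0" for t
    by (simp add: Gamma_integrand_def indicator_def)
  show ?thesis
    using False by (simp add: vanish Gamma_integrand_def [of "a + b"])
next
  case True
  define K where "K = (\<lambda>x. complex_of_real (u - x) powr (a - 1) * complex_of_real x powr (b - 1))"
  have "Gamma_integrand b t * Gamma_integrand a (u - t) = indicator {0<..<u} t *\<^sub>R K t / complex_of_real (exp u)" for t
    by (cases "0 < t \<and> t < u")
       (auto simp: Gamma_integrand_def K_def indicator_def exp_diff field_simps simp del: of_real_diff)
  then have "(\<integral>t. Gamma_integrand b t * Gamma_integrand a (u - t) \<partial>lborel)
      = (LINT t:{0<..<u}|lborel. K t) / complex_of_real (exp u)"
    by (simp add: set_lebesgue_integral_def)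
  also have "(LINT t:{0<..<u}|lborel. K t) = integral {0<..<u} K"
  proof (rule set_borel_integral_eq_integral(2))
    have "K absolutely_integrable_on {0..u}"
      unfolding K_def by (rule Beta_kernel_absolutely_integrable[OF a b True])
    then have "K absolutely_integrable_on {0<..<u}"
      by (metis absolutely_integrable_on_open_interval box_real(1) cbox_interval)
    then show "set_integrable lborel {0<..<u} K"
      unfolding set_integrable_def K_def
      by (subst (asm) integrable_completion)
         (auto intro!: borel_measurable_continuous_on_indicator continuous_intros)
  qed
  also have "\<dots> = complex_of_real u powr (a + b - 1) * J"
    using has_integral_Beta_kernel_rescale[OF J True]
    unfolding K_def has_integral_Icc_iff_Ioo by (rule integral_unique)
  finally show ?thesis
    using True by (simp add: Gamma_integrand_def)
qed

theorem has_integral_Beta_complex: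
  fixes a b :: complex
  assumes a: "Re a > 0" and b: "Re b > 0"
  shows "((\<lambda>x. complex_of_real (1 - x) powr (a - 1) * complex_of_real x powr (b - 1)) has_integral Beta a b) {0..1}"
proof -
  define K where "K = (\<lambda>x. complex_of_real (1 - x) powr (a - 1) * complex_of_real x powr (b - 1))"
  define J where "J = integral {0..1} K"
  have "K integrable_on {0..1}"
    using Beta_kernel_absolutely_integrable[OF a b, of 1] by (simp add: K_def set_lebesgue_integral_eq_integral(1))
  then have KJ: "(K has_integral J) {0..1}"
    unfolding J_def by (rule integrable_integral)
  define H where "H = (\<lambda>t u. Gamma_integrand b t * Gamma_integrand a (u - t))"
  have "integrable lborel (\<lambda>u. Gamma_integrand a (- t + 1 * u))" for t
    using lborel_integrable_real_affine_iff[of 1 "Gamma_integrand a" "- t"] integrable_Gamma_integrand[OF a]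
    by simp
  then have inner: "AE t in lborel. integrable lborel (H t)"
    unfolding H_def by (intro AE_I2 integrable_mult_right) simp
  have "(\<integral>u. norm (H t u) \<partial>lborel) = norm (Gamma_integrand b t) * (\<integral>u. norm (Gamma_integrand a u) \<partial>lborel)" for t
    using lborel_integral_real_affine[of 1 "\<lambda>u. norm (Gamma_integrand a (u - t))" t]
    by (simp add: H_def norm_mult)
  then have outer: "integrable lborel (\<lambda>t. \<integral>u. norm (H t u) \<partial>lborel)"
    using integrable_Gamma_integrand[OF b] by (simp add: integrable_norm)
  have "integrable (lborel \<Otimes>\<^sub>M lborel) (case_prod H)"
    by (rule lborel_pair.Fubini_integrable) (use inner outer in \<open>simp_all add: H_def\<close>)
  then have "(\<integral>u. (\<integral>t. H t u \<partial>lborel) \<partial>lborel) = (\<integral>t. (\<integral>u. H t u \<partial>lborel) \<partial>lborel)"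
    by (rule lborel_pair.Fubini_integral)
  then have "Gamma (a + b) * J = Gamma b * Gamma a"
    using a b unfolding H_def
    by (simp add: Gamma_integrand_convolution[OF a b KJ[unfolded K_def]] integral_Gamma_integrand
                  integral_Gamma_integrand_shift)
  then have "J = Beta a b"
    using Gamma_nonzero_Re_pos[of "a + b"] a b by (simp add: Beta_def field_simps)
  with KJ show ?thesis
    by (simp add: K_def)
qed

corollary has_integral_Beta_kernel:
  fixes a b :: complex and t :: real
  assumes "Re a > 0" "Re b > 0" "t > 0"
  shows "((\<lambda>x. complex_of_real (t - x) powr (a - 1) * complex_of_real x powr (b - 1))
           has_integral complex_of_real t powr (a + b - 1) * Beta a b) {0..t}"
  using has_integral_Beta_kernel_rescale[OF has_integral_Beta_complex[OF assms(1,2)] assms(3)] .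

lemma norm_Beta_le:
  fixes a b :: complex
  assumes "Re a > 0" "Re b > 0"
  shows "norm (Beta a b) \<le> Beta (Re a) (Re b)"
proof -
  have complex: "((\<lambda>x. complex_of_real (1 - x) powr (a - 1) * complex_of_real x powr (b - 1)) has_integral Beta a b) {0..1}"
    by (rule has_integral_Beta_complex[OF assms])
  have real: "((\<lambda>x. (1 - x) powr (Re a - 1) * x powr (Re b - 1)) has_integral Beta (Re a) (Re b)) {0..1}"
    using has_integral_Beta_kernel_real[of "Re a" "Re b" 1] assms by simp
  have "norm (integral {0..1} (\<lambda>x. complex_of_real (1 - x) powr (a - 1) * complex_of_real x powr (b - 1)))
        \<le> integral {0..1} (\<lambda>x. (1 - x) powr (Re a - 1) * x powr (Re b - 1))"
    using complex real
    by (intro integral_norm_bound_integral)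
       (auto simp: has_integral_integrable norm_mult norm_powr_real_powr simp del: of_real_diff)
  then show ?thesis
    using integral_unique[OF complex] integral_unique[OF real] by simp
qed

section \<open>Convergence of the Prabhakar series\<close>

lemma Beta_real_nat_eq:
  fixes c :: real
  assumes "c > 0"
  shows "Beta (1 + real N) c = fact N / pochhammer c (Suc N)"
proof -
  have "rGamma c = pochhammer c (Suc N) * rGamma (c + of_nat (Suc N))"
    by (rule pochhammer_rGamma)
  then have "Gamma (c + of_nat (Suc N)) = pochhammer c (Suc N) * Gamma c"
    using assms by (auto simp: Gamma_def field_simps rGamma_eq_zero_iff elim!: nonpos_Ints_cases)
  moreover have "Gamma (1 + real N) = fact N"
    using Gamma_fact[of N] by simp
  moreover have "Gamma c \<noteq> 0"
    using Gamma_real_pos[OF assms] by simp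
  ultimately show ?thesis
    by (simp add: Beta_def add_ac)
qed

lemma Beta_real_nat_tendsto_0:
  fixes c :: real
  assumes "c > 0"
  shows "(\<lambda>N. Beta (1 + real N) c) \<longlonglongrightarrow> 0"
proof -
  have "eventually (\<lambda>N. Beta (1 + real N) c = Gamma_series c N / exp (c * ln (real N))) sequentially"
    using eventually_gt_at_top[of "0::nat"]
    by eventually_elim (simp add: Beta_real_nat_eq[OF assms] Gamma_series_def)
  moreover have "filterlim (\<lambda>N::nat. exp (c * ln (real N))) at_top sequentially"
    using assms by real_asymp
  then have "(\<lambda>N. Gamma_series c N / exp (c * ln (real N))) \<longlonglongrightarrow> 0"
    by (intro tendsto_divide_0[OF Gamma_series_LIMSEQ] filterlim_at_top_imp_at_infinity)
  ultimately show ?thesis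
    by (simp add: tendsto_cong)
qed

lemma Beta_real_eventually_less:
  fixes c e :: real
  assumes "c > 0" "e > 0"
  obtains X0 where "\<And>X. X \<ge> X0 \<Longrightarrow> Beta X c < e"
proof -
  from order_tendstoD(2)[OF Beta_real_nat_tendsto_0[OF assms(1)] assms(2)]
  obtain N where "Beta (1 + real N) c < e"
    by (auto simp: eventually_sequentially)
  moreover have "Beta X c \<le> Beta (1 + real N) c" if "X \<ge> 1 + real N" for X
    using that assms by (intro Beta_real_mono) auto
  ultimately show ?thesis
    using that[of "1 + real N"] by force
qed

definition Prabhakar_coeff :: "complex \<Rightarrow> complex \<Rightarrow> nat \<Rightarrow> complex" where
  "Prabhakar_coeff \<gamma> z m = Gamma (\<gamma> + of_nat m) / (Gamma \<gamma> * fact m) * z ^ m"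

lemma ML3_eq_suminf_Prabhakar_coeff: "ML3 \<gamma> \<nu> \<delta> z = (\<Sum>m. Prabhakar_coeff \<gamma> z m / Gamma (\<nu> * of_nat m + \<delta>))"
  by (simp add: ML3_def Prabhakar_coeff_def)

lemma Prabhakar_coeff_mult: "Prabhakar_coeff \<gamma> (\<eta> * w) m = Prabhakar_coeff \<gamma> \<eta> m * w ^ m"
  by (simp add: Prabhakar_coeff_def power_mult_distrib)

lemma Prabhakar_coeff_Suc:
  assumes "Re \<gamma> > 0"
  shows "Prabhakar_coeff \<gamma> z (Suc m) = Prabhakar_coeff \<gamma> z m * ((\<gamma> + of_nat m) * z / of_nat (Suc m))"
proof -
  have "Gamma (\<gamma> + of_nat m + 1) = (\<gamma> + of_nat m) * Gamma (\<gamma> + of_nat m)"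
    using assms by (intro Gamma_plus1 Re_pos_not_nonpos_Ints) (simp add: add_pos_nonneg)
  then show ?thesis
    by (simp add: Prabhakar_coeff_def add_ac field_simps)
qed

lemma inverse_Gamma_add_eq_Beta:
  fixes w v :: complex
  assumes "Re w > 0" "Re v > 0"
  shows "1 / Gamma (w + v) = 1 / Gamma w * (Beta w v / Gamma v)"
  using Gamma_nonzero_Re_pos[OF assms(1)] Gamma_nonzero_Re_pos[OF assms(2)] by (simp add: Beta_def)

lemma norm_Pochhammer_ratio_le:
  fixes \<gamma> z :: complex
  shows "norm ((\<gamma> + of_nat m) * z / of_nat (Suc m)) \<le> (norm \<gamma> + 1) * norm z"
proof -
  have "norm (\<gamma> + of_nat m) \<le> norm \<gamma> + real m"
    using norm_triangle_ineq[of \<gamma> "of_nat m"] by simp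
  also have "\<dots> \<le> (norm \<gamma> + 1) * real (Suc m)"
    by (simp add: algebra_simps)
  finally have "norm (\<gamma> + of_nat m) / real (Suc m) \<le> norm \<gamma> + 1"
    by (simp add: field_simps)
  moreover have "norm ((\<gamma> + of_nat m) * z / of_nat (Suc m)) = norm (\<gamma> + of_nat m) / real (Suc m) * norm z"
    by (simp only: norm_mult norm_divide norm_of_nat) simp
  ultimately show ?thesis
    by (metis mult_right_mono norm_ge_zero)
qed

lemma Prabhakar_term_Suc:
  fixes \<gamma> \<nu> \<delta> z :: complex
  assumes \<nu>: "Re \<nu> > 0" and \<delta>: "Re \<delta> > 0" and \<gamma>: "Re \<gamma> > 0"
  shows "Prabhakar_coeff \<gamma> z (Suc m) / Gamma (\<nu> * of_nat (Suc m) + \<delta>)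
       = Prabhakar_coeff \<gamma> z m / Gamma (\<nu> * of_nat m + \<delta>) * ((\<gamma> + of_nat m) * z / of_nat (Suc m))
         * (Beta (\<nu> * of_nat m + \<delta>) \<nu> / Gamma \<nu>)"
proof -
  define w where "w = \<nu> * of_nat m + \<delta>"
  have w: "Re w > 0"
    using \<nu> \<delta> by (simp add: w_def add_nonneg_pos)
  have "\<nu> * of_nat (Suc m) + \<delta> = w + \<nu>"
    by (simp add: w_def algebra_simps)
  then have "Prabhakar_coeff \<gamma> z (Suc m) / Gamma (\<nu> * of_nat (Suc m) + \<delta>)
      = Prabhakar_coeff \<gamma> z (Suc m) * (1 / Gamma (w + \<nu>))"
    by simp
  also have "\<dots> = Prabhakar_coeff \<gamma> z m * ((\<gamma> + of_nat m) * z / of_nat (Suc m)) * (1 / Gamma w * (Beta w \<nu> / Gamma \<nu>))"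
    by (simp only: Prabhakar_coeff_Suc[OF \<gamma>] inverse_Gamma_add_eq_Beta[OF w \<nu>])
  finally show ?thesis
    by (simp add: w_def)
qed

lemma norm_Prabhakar_term_Suc_le:
  fixes \<gamma> \<nu> \<delta> z :: complex
  assumes \<nu>: "Re \<nu> > 0" and \<delta>: "Re \<delta> > 0" and \<gamma>: "Re \<gamma> > 0"
  shows "norm (Prabhakar_coeff \<gamma> z (Suc m) / Gamma (\<nu> * of_nat (Suc m) + \<delta>))
       \<le> norm (Prabhakar_coeff \<gamma> z m / Gamma (\<nu> * of_nat m + \<delta>))
         * ((norm \<gamma> + 1) * norm z / norm (Gamma \<nu>) * Beta (Re \<nu> * real m + Re \<delta>) (Re \<nu>))"
proof -
  have Re_pos: "Re (\<nu> * of_nat m + \<delta>) > 0"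
    using \<nu> \<delta> by (simp add: add_nonneg_pos)
  have "norm (Prabhakar_coeff \<gamma> z (Suc m) / Gamma (\<nu> * of_nat (Suc m) + \<delta>))
      = norm (Prabhakar_coeff \<gamma> z m / Gamma (\<nu> * of_nat m + \<delta>))
        * (norm ((\<gamma> + of_nat m) * z / of_nat (Suc m)) * (norm (Beta (\<nu> * of_nat m + \<delta>) \<nu>) / norm (Gamma \<nu>)))"
    unfolding Prabhakar_term_Suc[OF assms] by (simp only: norm_mult norm_divide mult.assoc)
  also have "\<dots> \<le> norm (Prabhakar_coeff \<gamma> z m / Gamma (\<nu> * of_nat m + \<delta>))
        * ((norm \<gamma> + 1) * norm z * (Beta (Re \<nu> * real m + Re \<delta>) (Re \<nu>) / norm (Gamma \<nu>)))"
    using norm_Beta_le[OF Re_pos \<nu>]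
    by (intro mult_left_mono mult_mono norm_Pochhammer_ratio_le divide_right_mono) auto
  finally show ?thesis
    by (simp add: mult_ac)
qed

lemma summable_norm_Prabhakar_terms:
  fixes \<gamma> \<nu> \<delta> z :: complex
  assumes \<nu>: "Re \<nu> > 0" and \<delta>: "Re \<delta> > 0" and \<gamma>: "Re \<gamma> > 0"
  shows "summable (\<lambda>m. norm (Prabhakar_coeff \<gamma> z m / Gamma (\<nu> * of_nat m + \<delta>)))"
proof -
  define K where "K = (norm \<gamma> + 1) * norm z / norm (Gamma \<nu>)"
  have "K \<ge> 0"
    by (simp add: K_def)
  obtain X0 where X0: "\<And>X. X \<ge> X0 \<Longrightarrow> Beta X (Re \<nu>) < 1 / (2 * (K + 1))"
    using Beta_real_eventually_less[of "Re \<nu>" "1 / (2 * (K + 1))"] \<nu> \<open>K \<ge> 0\<close> by auto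
  obtain N :: nat where N: "real N \<ge> X0 / Re \<nu>"
    using real_arch_simple by blast
  show ?thesis
  proof (rule summable_ratio_test[of "1/2" N])
    fix m assume "m \<ge> N"
    then have "X0 \<le> Re \<nu> * real m + Re \<delta>"
      using N \<nu> \<delta> by (simp add: field_simps) (smt (verit) mult_left_mono of_nat_le_iff)
    then have "K * Beta (Re \<nu> * real m + Re \<delta>) (Re \<nu>) \<le> K * (1 / (2 * (K + 1)))"
      using X0 \<open>K \<ge> 0\<close> by (intro mult_left_mono) (auto intro: less_imp_le)
    also have "\<dots> \<le> 1 / 2"
      using \<open>K \<ge> 0\<close> by (simp add: field_simps)
    finally have small: "K * Beta (Re \<nu> * real m + Re \<delta>) (Re \<nu>) \<le> 1 / 2" .
    have "norm (Prabhakar_coeff \<gamma> z (Suc m) / Gamma (\<nu> * of_nat (Suc m) + \<delta>))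
        \<le> norm (Prabhakar_coeff \<gamma> z m / Gamma (\<nu> * of_nat m + \<delta>)) * (K * Beta (Re \<nu> * real m + Re \<delta>) (Re \<nu>))"
      using norm_Prabhakar_term_Suc_le[OF assms, of z m] by (simp only: K_def)
    also have "\<dots> \<le> norm (Prabhakar_coeff \<gamma> z m / Gamma (\<nu> * of_nat m + \<delta>)) * (1 / 2)"
      by (rule mult_left_mono[OF small norm_ge_zero])
    finally show "norm (norm (Prabhakar_coeff \<gamma> z (Suc m) / Gamma (\<nu> * of_nat (Suc m) + \<delta>)))
        \<le> 1 / 2 * norm (norm (Prabhakar_coeff \<gamma> z m / Gamma (\<nu> * of_nat m + \<delta>)))"
      by (simp add: mult.commute)
  qed simp
qed

definition Prabhakar_kernel :: "complex \<Rightarrow> complex \<Rightarrow> complex \<Rightarrow> complex \<Rightarrow> real \<Rightarrow> complex" where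
  "Prabhakar_kernel \<gamma> \<nu> \<delta> \<eta> x = complex_of_real x powr (\<delta> - 1) * ML3 \<gamma> \<nu> \<delta> (\<eta> * complex_of_real x powr \<nu>)"

lemma has_sum_Prabhakar_kernel:
  fixes \<gamma> \<nu> \<delta> \<eta> :: complex and s :: real
  assumes "Re \<gamma> > 0" "Re \<nu> > 0" "Re \<delta> > 0" and s: "s > 0"
  shows "((\<lambda>m. Prabhakar_coeff \<gamma> \<eta> m / Gamma (\<nu> * of_nat m + \<delta>) * complex_of_real s powr (\<nu> * of_nat m + \<delta> - 1))
          has_sum Prabhakar_kernel \<gamma> \<nu> \<delta> \<eta> s) UNIV"
    and "(\<lambda>m. norm (Prabhakar_coeff \<gamma> \<eta> m / Gamma (\<nu> * of_nat m + \<delta>)) * s powr (Re \<nu> * real m)) summable_on UNIV"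
proof -
  define z where "z = \<eta> * complex_of_real s powr \<nu>"
  define T where "T = (\<lambda>m. Prabhakar_coeff \<gamma> z m / Gamma (\<nu> * of_nat m + \<delta>))"
  have norm_T: "summable (\<lambda>m. norm (T m))"
    unfolding T_def using summable_norm_Prabhakar_terms assms by blast
  have T_eq: "T m = Prabhakar_coeff \<gamma> \<eta> m / Gamma (\<nu> * of_nat m + \<delta>) * complex_of_real s powr (\<nu> * of_nat m)" for m
    using s by (simp add: T_def z_def Prabhakar_coeff_mult powr_power mult_ac)
  have "T sums ML3 \<gamma> \<nu> \<delta> z"
    using summable_norm_cancel[OF norm_T] by (simp add: T_def ML3_eq_suminf_Prabhakar_coeff summable_sums)
  from has_sum_cmult_right[OF norm_summable_imp_has_sum[OF norm_T this], of "complex_of_real s powr (\<delta> - 1)"]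
  show "((\<lambda>m. Prabhakar_coeff \<gamma> \<eta> m / Gamma (\<nu> * of_nat m + \<delta>) * complex_of_real s powr (\<nu> * of_nat m + \<delta> - 1))
          has_sum Prabhakar_kernel \<gamma> \<nu> \<delta> \<eta> s) UNIV"
    by (simp add: T_eq z_def Prabhakar_kernel_def powr_add [symmetric] algebra_simps)
  have "norm (T m) = norm (Prabhakar_coeff \<gamma> \<eta> m / Gamma (\<nu> * of_nat m + \<delta>)) * s powr (Re \<nu> * real m)" for m
    using s by (simp only: T_eq norm_mult norm_of_real_powr) simp
  with norm_T show "(\<lambda>m. norm (Prabhakar_coeff \<gamma> \<eta> m / Gamma (\<nu> * of_nat m + \<delta>)) * s powr (Re \<nu> * real m)) summable_on UNIV"
    by (simp add: summable_on_UNIV_nonneg_real_iff)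
qed

section \<open>Term-by-term convolution of generalised power series\<close>

lemma summable_on_times_nonneg:
  fixes u v :: "_ \<Rightarrow> real"
  assumes "u summable_on I" "v summable_on J" and "\<And>i. u i \<ge> 0" "\<And>j. v j \<ge> 0"
  shows "(\<lambda>(i, j). u i * v j) summable_on I \<times> J"
proof (rule nonneg_bdd_above_summable_on)
  show "bdd_above (sum (\<lambda>(i, j). u i * v j) ` {F. F \<subseteq> I \<times> J \<and> finite F})"
  proof (rule bdd_aboveI2, safe)
    fix F assume F: "F \<subseteq> I \<times> J" "finite F"
    have "(\<Sum>(i, j)\<in>F. u i * v j) \<le> (\<Sum>(i, j)\<in>fst ` F \<times> snd ` F. u i * v j)"
      using F assms by (intro sum_mono2) (force intro: mult_nonneg_nonneg)+
    also have "\<dots> = (\<Sum>i\<in>fst ` F. u i) * (\<Sum>j\<in>snd ` F. v j)"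
      by (simp add: sum.cartesian_product [symmetric] sum_product)
    also have "\<dots> \<le> infsum u I * infsum v J"
      using F assms
      by (intro mult_mono finite_sum_le_infsum infsum_nonneg sum_nonneg) force+
    finally show "(\<Sum>(i, j)\<in>F. u i * v j) \<le> infsum u I * infsum v J" .
  qed
qed (use assms in auto)

lemma has_sum_times_product:
  fixes f g :: "_ \<Rightarrow> complex"
  assumes f: "(\<lambda>i. norm (f i)) summable_on I" and g: "(\<lambda>j. norm (g j)) summable_on J"
  shows "((\<lambda>(i, j). f i * g j) has_sum (\<Sum>\<^sub>\<infinity>i\<in>I. f i) * (\<Sum>\<^sub>\<infinity>j\<in>J. g j)) (I \<times> J)"
proof (rule has_sum_SigmaI[where g = "\<lambda>i. f i * (\<Sum>\<^sub>\<infinity>j\<in>J. g j)"])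
  show "((\<lambda>j. case (i, j) of (i, j) \<Rightarrow> f i * g j) has_sum f i * (\<Sum>\<^sub>\<infinity>j\<in>J. g j)) J" for i
    using has_sum_cmult_right[OF has_sum_infsum[OF abs_summable_summable[OF g]]] by simp
  show "((\<lambda>i. f i * (\<Sum>\<^sub>\<infinity>j\<in>J. g j)) has_sum (\<Sum>\<^sub>\<infinity>i\<in>I. f i) * (\<Sum>\<^sub>\<infinity>j\<in>J. g j)) I"
    using has_sum_cmult_left[OF has_sum_infsum[OF abs_summable_summable[OF f]]] .
  have "(\<lambda>p. norm (case p of (i, j) \<Rightarrow> f i * g j)) summable_on I \<times> J"
    using summable_on_times_nonneg[OF f g] by (simp add: case_prod_beta case_prod_beta' norm_mult)
  then show "(\<lambda>(i, j). f i * g j) summable_on I \<times> J"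
    by (rule abs_summable_summable)
qed

lemma sums_bij_betw_UNIV:
  assumes "bij_betw e UNIV A" and "(f has_sum S) A"
  shows "(\<lambda>n. f (e n)) sums S"
  using assms has_sum_reindex_bij_betw[OF assms(1), of f] by (intro has_sum_imp_sums) auto

lemma summable_norm_integral_dominated:
  fixes g :: "'i \<Rightarrow> real \<Rightarrow> complex" and h :: "real \<Rightarrow> real"
  assumes g: "\<And>i. i \<in> A \<Longrightarrow> g i absolutely_integrable_on S"
    and h: "h integrable_on S"
    and dominated: "\<And>x F. x \<in> S \<Longrightarrow> finite F \<Longrightarrow> F \<subseteq> A \<Longrightarrow> (\<Sum>i\<in>F. norm (g i x)) \<le> h x"
  shows "(\<lambda>i. norm (integral S (g i))) summable_on A"
  unfolding abs_summable_iff_bdd_above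
proof (intro bdd_aboveI2[where M = "integral S h"], safe)
  fix F assume F: "F \<subseteq> A" "finite F"
  have g_int: "g i integrable_on S" "(\<lambda>x. norm (g i x)) integrable_on S" if "i \<in> F" for i
    using g that F by (simp_all add: absolutely_integrable_on_def subset_iff)
  have "(\<Sum>i\<in>F. norm (integral S (g i))) \<le> (\<Sum>i\<in>F. integral S (\<lambda>x. norm (g i x)))"
    using g_int by (intro sum_mono integral_norm_bound_integral) auto
  also have "\<dots> = integral S (\<lambda>x. \<Sum>i\<in>F. norm (g i x))"
    using F g_int by (subst integral_sum) auto
  also have "\<dots> \<le> integral S h"
    using F g_int h dominated by (intro integral_le integrable_sum) auto
  finally show "(\<Sum>i\<in>F. norm (integral S (g i))) \<le> integral S h" .
qed

lemma has_integral_infsum_dominated: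
  fixes g :: "'i \<Rightarrow> real \<Rightarrow> complex" and h :: "real \<Rightarrow> real"
  assumes A: "countable A" "infinite A"
    and g: "\<And>i. i \<in> A \<Longrightarrow> g i absolutely_integrable_on S"
    and h: "h integrable_on S"
    and dominated: "\<And>x F. x \<in> S \<Longrightarrow> finite F \<Longrightarrow> F \<subseteq> A \<Longrightarrow> (\<Sum>i\<in>F. norm (g i x)) \<le> h x"
  shows "((\<lambda>x. \<Sum>\<^sub>\<infinity>i\<in>A. g i x) has_integral (\<Sum>\<^sub>\<infinity>i\<in>A. integral S (g i))) S"
proof -
  obtain e :: "nat \<Rightarrow> 'i" where e: "bij_betw e UNIV A"
    using bij_betw_from_nat_into[OF A] by auto
  then have e_inj: "inj e" and e_in: "\<And>n. e n \<in> A"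
    by (auto simp: bij_betw_def)
  have g_int: "g i integrable_on S" if "i \<in> A" for i
    using g[OF that] by (simp add: absolutely_integrable_on_def)
  define f where "f N x = (\<Sum>n<N. g (e n) x)" for N x
  have f_int: "f N integrable_on S" for N
    unfolding f_def using g_int e_in by (intro integrable_sum) auto
  have f_bound: "norm (f N x) \<le> h x" if "x \<in> S" for N x
  proof -
    have "norm (f N x) \<le> (\<Sum>n<N. norm (g (e n) x))"
      unfolding f_def by (rule norm_sum)
    also have "\<dots> = (\<Sum>i\<in>e ` {..<N}. norm (g i x))"
      using e_inj by (subst sum.reindex) (auto intro: inj_on_subset)
    also have "\<dots> \<le> h x"
      using e_in by (intro dominated[OF that]) auto
    finally show ?thesis .
  qed
  have f_lim: "(\<lambda>N. f N x) \<longlonglongrightarrow> (\<Sum>\<^sub>\<infinity>i\<in>A. g i x)" if x: "x \<in> S" for x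
  proof -
    have "(\<lambda>i. norm (g i x)) summable_on A"
      unfolding abs_summable_iff_bdd_above using dominated[OF x] by (intro bdd_aboveI2[where M = "h x"]) auto
    then have "(\<lambda>n. g (e n) x) sums (\<Sum>\<^sub>\<infinity>i\<in>A. g i x)"
      by (rule sums_bij_betw_UNIV[OF e has_sum_infsum[OF abs_summable_summable]])
    then show ?thesis
      by (simp add: sums_def f_def)
  qed
  note limit = dominated_convergence[OF f_int h f_bound f_lim]
  have "integral S (f N) = (\<Sum>n<N. integral S (g (e n)))" for N
    unfolding f_def using g_int e_in by (subst integral_sum) auto
  with limit(2) have "(\<lambda>n. integral S (g (e n))) sums integral S (\<lambda>x. \<Sum>\<^sub>\<infinity>i\<in>A. g i x)"
    by (simp add: sums_def)
  moreover have "(\<lambda>n. integral S (g (e n))) sums (\<Sum>\<^sub>\<infinity>i\<in>A. integral S (g i))"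
    using summable_norm_integral_dominated[OF g h dominated]
    by (rule sums_bij_betw_UNIV[OF e has_sum_infsum[OF abs_summable_summable]])
  ultimately show ?thesis
    using limit(1) sums_unique2 by (metis has_integral_integral)
qed

lemma norm_powr_term_le:
  fixes c \<nu> A :: complex and s t :: real
  assumes "0 \<le> s" "s \<le> t" "Re \<nu> \<ge> 0"
  shows "norm (c * complex_of_real s powr (\<nu> * of_nat n + A - 1))
           \<le> norm c * t powr (Re \<nu> * real n) * s powr (Re A - 1)"
proof -
  have "norm (c * complex_of_real s powr (\<nu> * of_nat n + A - 1))
      = norm c * (s powr (Re \<nu> * real n) * s powr (Re A - 1))"
    using assms by (simp add: norm_mult norm_of_real_powr powr_add [symmetric] add_diff_eq)
  also have "\<dots> \<le> norm c * (t powr (Re \<nu> * real n) * s powr (Re A - 1))"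
    using assms by (intro mult_left_mono mult_right_mono powr_mono2) auto
  finally show ?thesis
    by (simp add: mult_ac)
qed

lemma summable_norm_powr_terms:
  fixes c :: "'i \<Rightarrow> complex" and n :: "'i \<Rightarrow> nat" and \<nu> A :: complex and s t :: real
  assumes "0 \<le> s" "s \<le> t" "Re \<nu> \<ge> 0"
    and "(\<lambda>i. norm (c i) * t powr (Re \<nu> * real (n i))) summable_on I"
  shows "(\<lambda>i. norm (c i * complex_of_real s powr (\<nu> * of_nat (n i) + A - 1))) summable_on I"
  by (rule Infinite_Sum.abs_summable_on_comparison_test'[OF summable_on_cmult_left[OF assms(4)]])
     (rule norm_powr_term_le[OF assms(1-3)])

lemma has_integral_conv_powr:
  fixes a b c d :: complex and t :: real
  assumes "Re a > 0" "Re b > 0" "t > 0"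
  shows "((\<lambda>x. c * complex_of_real (t - x) powr (a - 1) * (d * complex_of_real x powr (b - 1)))
           has_integral c * d * Beta a b * complex_of_real t powr (a + b - 1)) {0..t}"
    and "(\<lambda>x. c * complex_of_real (t - x) powr (a - 1) * (d * complex_of_real x powr (b - 1)))
           absolutely_integrable_on {0..t}"
proof -
  have "(\<lambda>x. c * complex_of_real (t - x) powr (a - 1) * (d * complex_of_real x powr (b - 1)))
      = (\<lambda>x. c * d * (complex_of_real (t - x) powr (a - 1) * complex_of_real x powr (b - 1)))"
    by (simp add: fun_eq_iff mult_ac)
  then show "((\<lambda>x. c * complex_of_real (t - x) powr (a - 1) * (d * complex_of_real x powr (b - 1)))
           has_integral c * d * Beta a b * complex_of_real t powr (a + b - 1)) {0..t}"
    and "(\<lambda>x. c * complex_of_real (t - x) powr (a - 1) * (d * complex_of_real x powr (b - 1)))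
           absolutely_integrable_on {0..t}"
    using has_integral_mult_right[OF has_integral_Beta_kernel[OF assms], of "c * d"]
      set_integrable_mult_right[OF Beta_kernel_absolutely_integrable[OF assms], of "c * d"]
    by (simp_all add: mult_ac)
qed

lemma has_integral_conv_power_terms:
  fixes c :: "'i \<Rightarrow> complex" and n :: "'i \<Rightarrow> nat" and d :: "nat \<Rightarrow> complex"
    and A B \<nu> :: complex and t :: real
  assumes I: "countable I" "I \<noteq> {}"
    and pos: "Re A > 0" "Re B > 0" "Re \<nu> > 0" "t > 0"
    and c: "(\<lambda>i. norm (c i) * t powr (Re \<nu> * real (n i))) summable_on I"
    and d: "(\<lambda>m. norm (d m) * t powr (Re \<nu> * real m)) summable_on UNIV"
  shows "((\<lambda>x. \<Sum>\<^sub>\<infinity>(i, m)\<in>I \<times> UNIV. c i * complex_of_real (t - x) powr (\<nu> * of_nat (n i) + A - 1)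
                                    * (d m * complex_of_real x powr (\<nu> * of_nat m + B - 1)))
          has_integral (\<Sum>\<^sub>\<infinity>(i, m)\<in>I \<times> UNIV. c i * d m * Beta (\<nu> * of_nat (n i) + A) (\<nu> * of_nat m + B)
                                    * complex_of_real t powr (\<nu> * of_nat (n i + m) + (A + B) - 1))) {0..t}"
    and "(\<lambda>(i, m). c i * d m * Beta (\<nu> * of_nat (n i) + A) (\<nu> * of_nat m + B)
                    * complex_of_real t powr (\<nu> * of_nat (n i + m) + (A + B) - 1)) summable_on I \<times> UNIV"
proof -
  define g where "g p x = (case p of (i, m) \<Rightarrow> c i * complex_of_real (t - x) powr (\<nu> * of_nat (n i) + A - 1)
                            * (d m * complex_of_real x powr (\<nu> * of_nat m + B - 1)))" for p x
  define T where "T = (\<lambda>(i, m). c i * d m * Beta (\<nu> * of_nat (n i) + A) (\<nu> * of_nat m + B)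
                            * complex_of_real t powr (\<nu> * of_nat (n i + m) + (A + B) - 1))"
  define u where "u i = norm (c i) * t powr (Re \<nu> * real (n i))" for i
  define v where "v m = norm (d m) * t powr (Re \<nu> * real m)" for m
  define w where "w x = (t - x) powr (Re A - 1) * x powr (Re B - 1)" for x
  define U where "U = (\<Sum>\<^sub>\<infinity>(i, m)\<in>I \<times> UNIV. u i * v m)"
  have uv: "(\<lambda>(i, m). u i * v m) summable_on I \<times> UNIV"
    using c d by (intro summable_on_times_nonneg) (simp_all add: u_def [abs_def] v_def [abs_def])
  have dominated: "(\<Sum>p\<in>P. norm (g p x)) \<le> U * w x" if "x \<in> {0..t}" "finite P" "P \<subseteq> I \<times> UNIV" for x P
  proof -
    have "norm (g (i, m) x) \<le> (u i * (t - x) powr (Re A - 1)) * (v m * x powr (Re B - 1))" for i m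
      unfolding g_def prod.case norm_mult [of "_ * _"] u_def v_def
      using that pos by (intro mult_mono norm_powr_term_le) auto
    then have "norm (g p x) \<le> u (fst p) * v (snd p) * w x" for p
      by (cases p) (simp add: w_def mult_ac)
    then have "(\<Sum>p\<in>P. norm (g p x)) \<le> (\<Sum>p\<in>P. u (fst p) * v (snd p) * w x)"
      by (rule sum_mono)
    also have "\<dots> = (\<Sum>(i, m)\<in>P. u i * v m) * w x"
      by (simp add: sum_distrib_right case_prod_beta)
    also have "\<dots> \<le> U * w x"
      unfolding U_def using that uv
      by (intro mult_right_mono finite_sum_le_infsum) (auto simp: w_def u_def v_def)
    finally show ?thesis .
  qed
  have "((\<lambda>x. U * w x) has_integral U * (t powr (Re A + Re B - 1) * Beta (Re A) (Re B))) {0..t}"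
    unfolding w_def using has_integral_Beta_kernel_real[of "Re A" "Re B" t] pos
    by (intro has_integral_mult_right) simp
  then have h_int: "(\<lambda>x. U * w x) integrable_on {0..t}"
    by blast
  have Re_pos: "Re (\<nu> * of_nat k + A) > 0" "Re (\<nu> * of_nat k + B) > 0" for k
    using pos by (simp_all add: add_nonneg_pos)
  have g_abs: "g p absolutely_integrable_on {0..t}" for p
  proof (cases p)
    case (Pair i m)
    with has_integral_conv_powr(2)[OF Re_pos(1)[of "n i"] Re_pos(2)[of m] pos(4), of "c i" "d m"] show ?thesis
      by (simp add: g_def [abs_def])
  qed
  have integral_g: "integral {0..t} (g p) = T p" for p
  proof (cases p)
    case (Pair i m)
    have "(\<nu> * of_nat (n i) + A) + (\<nu> * of_nat m + B) - 1 = \<nu> * of_nat (n i + m) + (A + B) - 1"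
      by (simp add: algebra_simps)
    with has_integral_conv_powr(1)[OF Re_pos(1)[of "n i"] Re_pos(2)[of m] pos(4), of "c i" "d m"] show ?thesis
      unfolding Pair g_def [abs_def] T_def prod.case by (intro integral_unique) simp
  qed
  have "countable (I \<times> (UNIV :: nat set))" "infinite (I \<times> (UNIV :: nat set))"
    using I by (auto simp: countable_SIGMA dest: finite_cartesian_productD2)
  from has_integral_infsum_dominated[OF this g_abs h_int dominated]
  show "((\<lambda>x. \<Sum>\<^sub>\<infinity>(i, m)\<in>I \<times> UNIV. c i * complex_of_real (t - x) powr (\<nu> * of_nat (n i) + A - 1)
                                    * (d m * complex_of_real x powr (\<nu> * of_nat m + B - 1)))
          has_integral (\<Sum>\<^sub>\<infinity>(i, m)\<in>I \<times> UNIV. c i * d m * Beta (\<nu> * of_nat (n i) + A) (\<nu> * of_nat m + B)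
                                    * complex_of_real t powr (\<nu> * of_nat (n i + m) + (A + B) - 1))) {0..t}"
    unfolding integral_g by (simp only: T_def g_def)
  from summable_norm_integral_dominated[OF g_abs h_int dominated]
  show "(\<lambda>(i, m). c i * d m * Beta (\<nu> * of_nat (n i) + A) (\<nu> * of_nat m + B)
                    * complex_of_real t powr (\<nu> * of_nat (n i + m) + (A + B) - 1)) summable_on I \<times> UNIV"
    unfolding integral_g T_def [symmetric] by (rule abs_summable_summable)
qed

lemma has_sum_conv_power_series:
  fixes c :: "'i \<Rightarrow> complex" and n :: "'i \<Rightarrow> nat" and d :: "nat \<Rightarrow> complex"
    and A B \<nu> :: complex and F G :: "real \<Rightarrow> complex" and t :: real
  assumes I: "countable I" "I \<noteq> {}"
    and pos: "Re A > 0" "Re B > 0" "Re \<nu> > 0" "t > 0"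
    and F: "\<And>s. s > 0 \<Longrightarrow> ((\<lambda>i. c i * complex_of_real s powr (\<nu> * of_nat (n i) + A - 1)) has_sum F s) I"
    and G: "\<And>s. s > 0 \<Longrightarrow> ((\<lambda>m. d m * complex_of_real s powr (\<nu> * of_nat m + B - 1)) has_sum G s) UNIV"
    and c: "(\<lambda>i. norm (c i) * t powr (Re \<nu> * real (n i))) summable_on I"
    and d: "(\<lambda>m. norm (d m) * t powr (Re \<nu> * real m)) summable_on UNIV"
  shows "((\<lambda>(i, m). c i * d m * Beta (\<nu> * of_nat (n i) + A) (\<nu> * of_nat m + B)
                    * complex_of_real t powr (\<nu> * of_nat (n i + m) + (A + B) - 1)) has_sum conv F G t) (I \<times> UNIV)"
proof -
  note termwise = has_integral_conv_power_terms[OF I pos c d]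
  have "(\<Sum>\<^sub>\<infinity>(i, m)\<in>I \<times> UNIV. c i * complex_of_real (t - x) powr (\<nu> * of_nat (n i) + A - 1)
                           * (d m * complex_of_real x powr (\<nu> * of_nat m + B - 1))) = F (t - x) * G x"
    if x: "x \<in> {0<..<t}" for x
  proof -
    have "F (t - x) = (\<Sum>\<^sub>\<infinity>i\<in>I. c i * complex_of_real (t - x) powr (\<nu> * of_nat (n i) + A - 1))"
      "G x = (\<Sum>\<^sub>\<infinity>m\<in>UNIV. d m * complex_of_real x powr (\<nu> * of_nat m + B - 1))"
      using F[of "t - x"] G[of x] x by (simp_all add: infsumI)
    moreover have "(\<lambda>i. norm (c i * complex_of_real (t - x) powr (\<nu> * of_nat (n i) + A - 1))) summable_on I"
      "(\<lambda>m. norm (d m * complex_of_real x powr (\<nu> * of_nat m + B - 1))) summable_on UNIV"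
      using x pos summable_norm_powr_terms[OF _ _ _ c, where s = "t - x" and A = A]
        summable_norm_powr_terms[OF _ _ _ d, where s = x and A = B]
      by auto
    ultimately show ?thesis
      by (simp add: infsumI has_sum_times_product)
  qed
  with termwise(1)
  have "((\<lambda>x. F (t - x) * G x) has_integral (\<Sum>\<^sub>\<infinity>(i, m)\<in>I \<times> UNIV. c i * d m * Beta (\<nu> * of_nat (n i) + A) (\<nu> * of_nat m + B)
                                    * complex_of_real t powr (\<nu> * of_nat (n i + m) + (A + B) - 1))) {0<..<t}"
    unfolding has_integral_Icc_iff_Ioo by (rule has_integral_eq[rotated]) simp
  then have "conv F G t = (\<Sum>\<^sub>\<infinity>(i, m)\<in>I \<times> UNIV. c i * d m * Beta (\<nu> * of_nat (n i) + A) (\<nu> * of_nat m + B)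
                                    * complex_of_real t powr (\<nu> * of_nat (n i + m) + (A + B) - 1))"
    unfolding conv_def has_integral_Icc_iff_Ioo [symmetric] by (rule integral_unique)
  with termwise(2) show ?thesis
    by (simp add: has_sum_infsum)
qed

lemma summable_norm_Beta_coeffs:
  fixes c :: "'i \<Rightarrow> complex" and n :: "'i \<Rightarrow> nat" and d :: "nat \<Rightarrow> complex"
    and A B \<nu> :: complex and t :: real
  assumes pos: "Re A > 0" "Re B > 0" "Re \<nu> > 0" "t > 0"
    and c: "(\<lambda>i. norm (c i) * t powr (Re \<nu> * real (n i))) summable_on I"
    and d: "(\<lambda>m. norm (d m) * t powr (Re \<nu> * real m)) summable_on UNIV"
  shows "(\<lambda>(i, m). norm (c i * d m * Beta (\<nu> * of_nat (n i) + A) (\<nu> * of_nat m + B))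
                    * t powr (Re \<nu> * real (n i + m))) summable_on (I \<times> UNIV)"
proof (rule summable_on_comparison_test)
  show "(\<lambda>(i, m). norm (c i) * t powr (Re \<nu> * real (n i)) * (norm (d m) * t powr (Re \<nu> * real m))
          * Beta (Re A) (Re B)) summable_on I \<times> UNIV"
    using summable_on_cmult_left[OF summable_on_times_nonneg[OF c d]] by (simp add: case_prod_beta')
  fix p :: "'i \<times> nat"
  obtain i m where p: "p = (i, m)"
    by fastforce
  have Re_le: "Re A \<le> Re (\<nu> * of_nat (n i) + A)" "Re B \<le> Re (\<nu> * of_nat m + B)"
    using pos by simp_all
  have "norm (Beta (\<nu> * of_nat (n i) + A) (\<nu> * of_nat m + B))
      \<le> Beta (Re (\<nu> * of_nat (n i) + A)) (Re (\<nu> * of_nat m + B))"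
    using pos by (intro norm_Beta_le) (simp_all add: add_nonneg_pos)
  also have "\<dots> \<le> Beta (Re A) (Re B)"
    using pos Re_le by (intro Beta_real_mono) simp_all
  finally have Beta_le: "norm (Beta (\<nu> * of_nat (n i) + A) (\<nu> * of_nat m + B)) \<le> Beta (Re A) (Re B)" .
  have "norm (c i * d m * Beta (\<nu> * of_nat (n i) + A) (\<nu> * of_nat m + B)) * t powr (Re \<nu> * real (n i + m))
      = norm (c i) * norm (d m) * t powr (Re \<nu> * real (n i + m)) * norm (Beta (\<nu> * of_nat (n i) + A) (\<nu> * of_nat m + B))"
    by (simp add: norm_mult mult_ac)
  also have "\<dots> \<le> norm (c i) * norm (d m) * t powr (Re \<nu> * real (n i + m)) * Beta (Re A) (Re B)"
    by (rule mult_left_mono[OF Beta_le]) simp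
  also have "\<dots> = norm (c i) * t powr (Re \<nu> * real (n i)) * (norm (d m) * t powr (Re \<nu> * real m))
                      * Beta (Re A) (Re B)"
    by (simp add: powr_add [symmetric] distrib_left)
  finally show "(case p of (i, m) \<Rightarrow> norm (c i * d m * Beta (\<nu> * of_nat (n i) + A) (\<nu> * of_nat m + B))
                    * t powr (Re \<nu> * real (n i + m)))
      \<le> (case p of (i, m) \<Rightarrow> norm (c i) * t powr (Re \<nu> * real (n i)) * (norm (d m) * t powr (Re \<nu> * real m))
          * Beta (Re A) (Re B))"
    by (simp only: p prod.case)
qed (auto simp: case_prod_beta)

section \<open>Iterated convolution of Prabhakar kernels\<close>

definition MML_coeff ::
    "nat \<Rightarrow> (nat \<Rightarrow> complex) \<Rightarrow> complex \<Rightarrow> (nat \<Rightarrow> complex) \<Rightarrow> (nat \<Rightarrow> complex) \<Rightarrow> (nat \<Rightarrow> nat) \<Rightarrow> complex" where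
  "MML_coeff M \<gamma> \<nu> \<delta> \<eta> k =
     (\<Prod>j<M. Prabhakar_coeff (\<gamma> j) (\<eta> j) (k j)) / Gamma (\<nu> * of_nat (\<Sum>j<M. k j) + (\<Sum>j<M. \<delta> j))"

lemma MML_eq_infsum_Prabhakar_coeff:
  "MML M \<gamma> \<nu> \<delta> x = (\<Sum>\<^sub>\<infinity>k\<in>{..<M} \<rightarrow>\<^sub>E UNIV.
      (\<Prod>j<M. Prabhakar_coeff (\<gamma> j) (x j) (k j)) / Gamma (\<nu> * of_nat (\<Sum>j<M. k j) + \<delta>))"
  by (simp add: MML_def Prabhakar_coeff_def)

lemma MML_coeff_Suc:
  assumes "Re \<nu> > 0" "Re (\<Sum>j<N. \<delta> j) > 0" "Re (\<delta> N) > 0"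
  shows "MML_coeff (Suc N) \<gamma> \<nu> \<delta> \<eta> (k(N := m))
       = MML_coeff N \<gamma> \<nu> \<delta> \<eta> k * (Prabhakar_coeff (\<gamma> N) (\<eta> N) m / Gamma (\<nu> * of_nat m + \<delta> N))
         * Beta (\<nu> * of_nat (\<Sum>j<N. k j) + (\<Sum>j<N. \<delta> j)) (\<nu> * of_nat m + \<delta> N)"
proof -
  define a where "a = \<nu> * of_nat (\<Sum>j<N. k j) + (\<Sum>j<N. \<delta> j)"
  define b where "b = \<nu> * of_nat m + \<delta> N"
  have "Re a > 0"
    using assms by (simp add: a_def) (intro add_nonneg_pos mult_nonneg_nonneg sum_nonneg, auto simp: Re_sum)
  moreover have "Re b > 0"
    using assms by (simp add: b_def add_nonneg_pos)
  ultimately have "Gamma a \<noteq> 0" "Gamma b \<noteq> 0"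
    by (simp_all add: Gamma_nonzero_Re_pos)
  moreover have "\<nu> * of_nat (\<Sum>j<Suc N. (k(N := m)) j) + (\<Sum>j<Suc N. \<delta> j) = a + b"
    by (simp add: a_def b_def algebra_simps)
  moreover have "(\<Prod>j<Suc N. Prabhakar_coeff (\<gamma> j) (\<eta> j) ((k(N := m)) j))
      = (\<Prod>j<N. Prabhakar_coeff (\<gamma> j) (\<eta> j) (k j)) * Prabhakar_coeff (\<gamma> N) (\<eta> N) m"
    by simp
  ultimately show ?thesis
    unfolding MML_coeff_def Beta_def a_def [symmetric] b_def [symmetric] by (simp add: field_simps)
qed

lemma bij_betw_PiE_lessThan_Suc:
  "bij_betw (\<lambda>(k, m). k(N := m)) (({..<N} \<rightarrow>\<^sub>E A) \<times> A) ({..<Suc N} \<rightarrow>\<^sub>E A)"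
proof (rule bij_betwI[where g = "\<lambda>k. (k(N := undefined), k N)"])
  show "(\<lambda>(k, m). k(N := m)) \<in> ({..<N} \<rightarrow>\<^sub>E A) \<times> A \<rightarrow> {..<Suc N} \<rightarrow>\<^sub>E A"
  proof (rule Pi_I, clarify)
    fix k m assume "k \<in> {..<N} \<rightarrow>\<^sub>E A" "m \<in> A"
    then show "k(N := m) \<in> {..<Suc N} \<rightarrow>\<^sub>E A"
      by (simp add: lessThan_Suc PiE_fun_upd)
  qed
  show "(\<lambda>k. (k(N := undefined), k N)) \<in> ({..<Suc N} \<rightarrow>\<^sub>E A) \<rightarrow> ({..<N} \<rightarrow>\<^sub>E A) \<times> A"
  proof (rule Pi_I)
    fix k assume k: "k \<in> {..<Suc N} \<rightarrow>\<^sub>E A"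
    have "k(N := undefined) \<in> {..<N} \<rightarrow>\<^sub>E A"
    proof (rule fun_upd_in_PiE)
      show "k \<in> insert N {..<N} \<rightarrow>\<^sub>E A"
        using k by (simp only: lessThan_Suc)
    qed simp
    moreover have "k N \<in> A"
      by (rule PiE_mem[OF k]) simp
    ultimately show "(k(N := undefined), k N) \<in> ({..<N} \<rightarrow>\<^sub>E A) \<times> A"
      by simp
  qed
  show "(\<lambda>k. (k(N := undefined), k N)) ((\<lambda>(k, m). k(N := m)) p) = p" if "p \<in> ({..<N} \<rightarrow>\<^sub>E A) \<times> A" for p
  proof (cases p)
    case (Pair k m)
    with that have "k N = undefined"
      by (intro PiE_arb[of k "{..<N}" "\<lambda>_. A"]) auto
    with Pair show ?thesis
      by (simp add: fun_upd_idem)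
  qed
qed simp

lemma has_sum_PiE_lessThan_Suc_iff:
  "((\<lambda>(k, m). f (k(N := m))) has_sum S) (({..<N} \<rightarrow>\<^sub>E A) \<times> A) \<longleftrightarrow> (f has_sum S) ({..<Suc N} \<rightarrow>\<^sub>E A)"
  using has_sum_reindex_bij_betw[OF bij_betw_PiE_lessThan_Suc, where f = f and S = S]
  by (simp add: case_prod_beta')

lemma summable_on_PiE_lessThan_Suc_iff:
  "(\<lambda>(k, m). f (k(N := m))) summable_on ({..<N} \<rightarrow>\<^sub>E A) \<times> A \<longleftrightarrow> f summable_on ({..<Suc N} \<rightarrow>\<^sub>E A)"
  using summable_on_reindex_bij_betw[OF bij_betw_PiE_lessThan_Suc, where f = f]
  by (simp add: case_prod_beta')

lemma bij_betw_PiE_lessThan_1: "bij_betw (\<lambda>m. (\<lambda>_. undefined)(0 := m)) A ({..<Suc 0} \<rightarrow>\<^sub>E A)"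
proof (rule bij_betwI[where g = "\<lambda>k. k 0"])
  show "(\<lambda>m. (\<lambda>_. undefined)(0 := m)) \<in> A \<rightarrow> {..<Suc 0} \<rightarrow>\<^sub>E A"
    by (auto simp: PiE_iff extensional_def)
  show "(\<lambda>m. (\<lambda>_. undefined)(0 := m)) (k 0) = k" if "k \<in> {..<Suc 0} \<rightarrow>\<^sub>E A" for k
    using that by (auto simp: PiE_iff extensional_def fun_eq_iff)
qed auto

lemma has_sum_conv_iter_Prabhakar_kernel:
  fixes \<gamma> \<delta> \<eta> :: "nat \<Rightarrow> complex" and \<nu> :: complex and s :: real
  assumes \<gamma>: "\<And>j. j < M \<Longrightarrow> Re (\<gamma> j) > 0" and \<nu>: "Re \<nu> > 0" and \<delta>: "\<And>j. j < M \<Longrightarrow> Re (\<delta> j) > 0"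
    and "n < M" "s > 0"
  shows "((\<lambda>k. MML_coeff (Suc n) \<gamma> \<nu> \<delta> \<eta> k
              * complex_of_real s powr (\<nu> * of_nat (\<Sum>j<Suc n. k j) + (\<Sum>j<Suc n. \<delta> j) - 1))
           has_sum conv_iter (\<lambda>j. Prabhakar_kernel (\<gamma> j) \<nu> (\<delta> j) (\<eta> j)) n s) ({..<Suc n} \<rightarrow>\<^sub>E UNIV)
       \<and> (\<lambda>k. norm (MML_coeff (Suc n) \<gamma> \<nu> \<delta> \<eta> k) * s powr (Re \<nu> * real (\<Sum>j<Suc n. k j)))
           summable_on ({..<Suc n} \<rightarrow>\<^sub>E UNIV)"
  using assms(4,5)
proof (induction n arbitrary: s)
  case 0
  note series = has_sum_Prabhakar_kernel[OF \<gamma>[OF \<open>0 < M\<close>] \<nu> \<delta>[OF \<open>0 < M\<close>] \<open>s > 0\<close>, of "\<eta> 0"]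
  show ?case
    using series
    unfolding has_sum_reindex_bij_betw[OF bij_betw_PiE_lessThan_1, symmetric]
              summable_on_reindex_bij_betw[OF bij_betw_PiE_lessThan_1, symmetric]
    by (simp add: MML_coeff_def)
next
  case (Suc n)
  define f where "f = (\<lambda>j. Prabhakar_kernel (\<gamma> j) \<nu> (\<delta> j) (\<eta> j))"
  define A where "A = (\<Sum>j<Suc n. \<delta> j)"
  define c where "c = MML_coeff (Suc n) \<gamma> \<nu> \<delta> \<eta>"
  define d where "d m = Prabhakar_coeff (\<gamma> (Suc n)) (\<eta> (Suc n)) m / Gamma (\<nu> * of_nat m + \<delta> (Suc n))" for m
  have "Suc n < M"
    using Suc.prems by simp
  have Re_A: "Re A > 0"
    unfolding A_def Re_sum using \<delta> \<open>Suc n < M\<close> by (intro sum_pos) auto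
  have IH: "((\<lambda>k. c k * complex_of_real s' powr (\<nu> * of_nat (\<Sum>j<Suc n. k j) + A - 1)) has_sum conv_iter f n s')
              ({..<Suc n} \<rightarrow>\<^sub>E UNIV)"
    "(\<lambda>k. norm (c k) * s' powr (Re \<nu> * real (\<Sum>j<Suc n. k j))) summable_on ({..<Suc n} \<rightarrow>\<^sub>E UNIV)"
    if "s' > 0" for s'
    using Suc.IH[OF _ that] Suc.prems by (simp_all add: c_def A_def f_def)
  note series = has_sum_Prabhakar_kernel[OF \<gamma>[OF \<open>Suc n < M\<close>] \<nu> \<delta>[OF \<open>Suc n < M\<close>], of _ "\<eta> (Suc n)"]
  have G: "((\<lambda>m. d m * complex_of_real x powr (\<nu> * of_nat m + \<delta> (Suc n) - 1)) has_sum f (Suc n) x) UNIV"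
    if "x > 0" for x
    using series(1)[OF that] by (simp add: d_def f_def)
  have "countable ({..<Suc n} \<rightarrow>\<^sub>E (UNIV :: nat set))" "{..<Suc n} \<rightarrow>\<^sub>E (UNIV :: nat set) \<noteq> {}"
    by (auto intro: countable_PiE simp: PiE_eq_empty_iff)
  note conv = has_sum_conv_power_series[OF this Re_A \<delta>[OF \<open>Suc n < M\<close>] \<nu> \<open>s > 0\<close>
      IH(1) G IH(2)[OF \<open>s > 0\<close>] series(2)[OF \<open>s > 0\<close>, folded d_def]]
  note summable = summable_norm_Beta_coeffs[OF Re_A \<delta>[OF \<open>Suc n < M\<close>] \<nu> \<open>s > 0\<close>
      IH(2)[OF \<open>s > 0\<close>] series(2)[OF \<open>s > 0\<close>, folded d_def]]
  have coeff: "MML_coeff (Suc (Suc n)) \<gamma> \<nu> \<delta> \<eta> (k(Suc n := m))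
      = c k * d m * Beta (\<nu> * of_nat (\<Sum>j<Suc n. k j) + A) (\<nu> * of_nat m + \<delta> (Suc n))" for k m
    unfolding c_def d_def A_def using \<nu> Re_A \<delta>[OF \<open>Suc n < M\<close>]
    by (intro MML_coeff_Suc) (simp_all add: A_def)
  have sum_k: "(\<Sum>j<Suc (Suc n). (k(Suc n := m)) j) = (\<Sum>j<Suc n. k j) + m" for k :: "nat \<Rightarrow> nat" and m
    by simp
  have sum_\<delta>: "(\<Sum>j<Suc (Suc n). \<delta> j) = A + \<delta> (Suc n)"
    by (simp add: A_def)
  show ?case
    unfolding has_sum_PiE_lessThan_Suc_iff [symmetric] summable_on_PiE_lessThan_Suc_iff [symmetric]
    using conv summable by (simp only: coeff sum_k sum_\<delta> f_def conv_iter.simps)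
qed

lemma MML_term_eq_MML_coeff:
  fixes t :: real
  assumes "t > 0"
  shows "complex_of_real t powr ((\<Sum>j<M. \<delta> j) - 1)
         * ((\<Prod>j<M. Prabhakar_coeff (\<gamma> j) (\<eta> j * complex_of_real t powr \<nu>) (k j))
            / Gamma (\<nu> * of_nat (\<Sum>j<M. k j) + (\<Sum>j<M. \<delta> j)))
       = MML_coeff M \<gamma> \<nu> \<delta> \<eta> k * complex_of_real t powr (\<nu> * of_nat (\<Sum>j<M. k j) + (\<Sum>j<M. \<delta> j) - 1)"
proof -
  have "(\<Prod>j<M. Prabhakar_coeff (\<gamma> j) (\<eta> j * complex_of_real t powr \<nu>) (k j))
      = (\<Prod>j<M. Prabhakar_coeff (\<gamma> j) (\<eta> j) (k j)) * (complex_of_real t powr \<nu>) ^ (\<Sum>j<M. k j)"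
    by (simp add: Prabhakar_coeff_mult prod.distrib power_sum)
  also have "(complex_of_real t powr \<nu>) ^ (\<Sum>j<M. k j) = complex_of_real t powr (\<nu> * of_nat (\<Sum>j<M. k j))"
    using assms by (simp add: powr_power mult.commute)
  finally show ?thesis
    by (simp add: MML_coeff_def powr_add [symmetric] algebra_simps)
qed

lemma conv_iter_Prabhakar_kernel_eq_MML:
  fixes \<gamma> \<delta> \<eta> :: "nat \<Rightarrow> complex" and \<nu> :: complex and t :: real
  assumes \<gamma>: "\<And>j. j < M \<Longrightarrow> Re (\<gamma> j) > 0" and \<nu>: "Re \<nu> > 0" and \<delta>: "\<And>j. j < M \<Longrightarrow> Re (\<delta> j) > 0"
    and "M > 0" "t > 0"
  shows "conv_iter (\<lambda>j. Prabhakar_kernel (\<gamma> j) \<nu> (\<delta> j) (\<eta> j)) (M - 1) t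
       = complex_of_real t powr ((\<Sum>j<M. \<delta> j) - 1)
         * MML M \<gamma> \<nu> (\<Sum>j<M. \<delta> j) (\<lambda>j. \<eta> j * complex_of_real t powr \<nu>)"
proof -
  have "((\<lambda>k. MML_coeff M \<gamma> \<nu> \<delta> \<eta> k * complex_of_real t powr (\<nu> * of_nat (\<Sum>j<M. k j) + (\<Sum>j<M. \<delta> j) - 1))
      has_sum conv_iter (\<lambda>j. Prabhakar_kernel (\<gamma> j) \<nu> (\<delta> j) (\<eta> j)) (M - 1) t) ({..<M} \<rightarrow>\<^sub>E UNIV)"
    using has_sum_conv_iter_Prabhakar_kernel[OF \<gamma> \<nu> \<delta>, where n = "M - 1" and s = t and \<eta> = \<eta>] \<open>M > 0\<close> \<open>t > 0\<close> by simp
  then have "conv_iter (\<lambda>j. Prabhakar_kernel (\<gamma> j) \<nu> (\<delta> j) (\<eta> j)) (M - 1) t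
      = (\<Sum>\<^sub>\<infinity>k\<in>{..<M} \<rightarrow>\<^sub>E UNIV.
           MML_coeff M \<gamma> \<nu> \<delta> \<eta> k * complex_of_real t powr (\<nu> * of_nat (\<Sum>j<M. k j) + (\<Sum>j<M. \<delta> j) - 1))"
    by (rule infsumI [symmetric])
  also have "\<dots> = (\<Sum>\<^sub>\<infinity>k\<in>{..<M} \<rightarrow>\<^sub>E UNIV. complex_of_real t powr ((\<Sum>j<M. \<delta> j) - 1)
       * ((\<Prod>j<M. Prabhakar_coeff (\<gamma> j) (\<eta> j * complex_of_real t powr \<nu>) (k j))
          / Gamma (\<nu> * of_nat (\<Sum>j<M. k j) + (\<Sum>j<M. \<delta> j))))"
    by (rule infsum_cong) (rule MML_term_eq_MML_coeff [OF \<open>t > 0\<close>, symmetric])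
  also have "\<dots> = complex_of_real t powr ((\<Sum>j<M. \<delta> j) - 1)
       * MML M \<gamma> \<nu> (\<Sum>j<M. \<delta> j) (\<lambda>j. \<eta> j * complex_of_real t powr \<nu>)"
    unfolding MML_eq_infsum_Prabhakar_coeff by (rule infsum_cmult_right')
  finally show ?thesis .
qed

text \<open>
  At \<open>t = 0\<close> both sides are \<open>0\<close>, by the convention \<open>0 powr z = 0\<close>.
\<close>

theorem lemma2p1:
  fixes M :: nat and t :: real and \<gamma> \<delta> \<eta> :: "nat \<Rightarrow> complex" and \<nu> :: complex
  assumes "M \<ge> 1" and "t \<ge> 0"
    and "\<And>j. j < M \<Longrightarrow> Re (\<gamma> j) > 0"
    and "\<nu> \<noteq> 0" and "Re \<nu> > 0"
    and "\<And>j. j < M \<Longrightarrow> \<delta> j \<noteq> 0 \<and> Re (\<delta> j) > 0"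
    and "inj_on \<eta> {..<M}"
  shows "conv_iter (\<lambda>j x. complex_of_real x powr (\<delta> j - 1) * ML3 (\<gamma> j) \<nu> (\<delta> j) (\<eta> j * complex_of_real x powr \<nu>)) (M - 1) t
       = complex_of_real t powr ((\<Sum>j<M. \<delta> j) - 1)
         * MML M \<gamma> \<nu> (\<Sum>j<M. \<delta> j) (\<lambda>j. \<eta> j * complex_of_real t powr \<nu>)"
proof (cases "t = 0")
  case True
  obtain n where "M = Suc n"
    using assms(1) by (cases M) auto
  with True show ?thesis
    by (cases n) (simp_all add: conv_def)
next
  case False
  with assms(2) have "t > 0"
    by simp
  with assms(1,3,5,6) show ?thesis
    using conv_iter_Prabhakar_kernel_eq_MML[of M \<gamma> \<nu> \<delta> t \<eta>] by (simp add: Prabhakar_kernel_def [abs_def])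
qed

end
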